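(* Let $n\ge2$, $m\ge2$ be integers with $m\ge\sqrt n$, let $B_1,\ldots,B_m$ be mutually unbiased orthonormal bases of $\mathbb{C}^n$, let $\mathfrak{B}=\bigsqcup_{i=1}^m B_i$, and let $p,l$ be positive integers. If $\gamma:\{0,\ldots,l\}\to\{1,\ldots,p\}$ is a closed path, then $$W_\gamma=\begin{cases} n^{1-v_\gamma} & \text{if }\gamma\in\Gamma_l,\\[2pt] O_l\!\left(n^{1-v_\gamma}\left(\frac1m+\frac1n\right)\right) & \text{if }\gamma\notin\Gamma_l,\end{cases}$$ where the implied constant depends only on $l$.
   Context: Orthonormal bases $B_1,\ldots,B_m$ of $\mathbb{C}^n$ are mutually unbiased if $|\langle u,v\rangle|=\frac{1}{\sqrt n}$ for all $u\in B_i$, $v\in B_j$, $i\ne j$, where $\langle\cdot,\cdot\rangle$ is the standard Hermitian inner product. A closed path is a map $\gamma:\{0,\ldots,l\}\to\{1,\ldots,p\}$ with $\gamma(0)=\gamma(l)$; $V_\gamma=\gamma(\{0,\ldots,l\})$, $v_\gamma=\#V_\gamma$. For $s:V_\gamma\to\mathfrak{B}$ put $\omega_\gamma(s)=\prod_{i=0}^{l-1}\langle s(\gamma(i)),s(\gamma(i+1))\rangle$, and let $W_\gamma$ be the average of $\omega_\gamma(s)$ over all $(mn)^{v_\gamma}$ maps $s:V_\gamma\to\mathfrak{B}$. Identify a closed path of length $l$ with the cyclic word $(\gamma(0),\gamma(1),\ldots,\gamma(l-1))$ (indices taken mod $l$). The following two moves each produce a closed path of length $l-1$ by deleting one entry of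 the cyclic word: (Move 1) if $l\ge2$ and two cyclically consecutive entries are equal, delete one of them; (Move 2) if $l\ge2$ and some value occurs exactly once in the cyclic word, delete that entry. $\Gamma_l$ denotes the set of closed paths of length $l$ that can be transformed by a finite sequence of such moves into a closed path of length $1$ (a single vertex with a loop); these are the paths corresponding to "double trees" in the standard proof of the Marchenko–Pastur law. *)

theory Defs
  imports Complex_Main "HOL-Library.FuncSet"
begin

text \<open>Vectors of C^n are represented as functions nat => complex; only the
  coordinates 0..n-1 are relevant.\<close>
definition cinner :: "nat \<Rightarrow> (nat \<Rightarrow> complex) \<Rightarrow> (nat \<Rightarrow> complex) \<Rightarrow> complex" where
  "cinner n u v = (\<Sum>j<n. u j * cnj (v j))"

definition orthonormal_basis :: "nat \<Rightarrow> (nat \<Rightarrow> nat \<Rightarrow> complex) \<Rightarrow> bool" where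
  "orthonormal_basis n b \<longleftrightarrow>
     (\<forall>j<n. \<forall>k<n. cinner n (b j) (b k) = (if j = k then 1 else 0)) \<and>
     (\<forall>v :: nat \<Rightarrow> complex. \<exists>c :: nat \<Rightarrow> complex. \<forall>t<n. v t = (\<Sum>k<n. c k * b k t))"

text \<open>B i k is the k-th vector of the i-th basis (i < m, k < n).  The bases
  B 0, ..., B (m-1) are mutually unbiased orthonormal bases of C^n.\<close>
definition mutually_unbiased :: "nat \<Rightarrow> nat \<Rightarrow> (nat \<Rightarrow> nat \<Rightarrow> nat \<Rightarrow> complex) \<Rightarrow> bool" where
  "mutually_unbiased n m B \<longleftrightarrow>
     (\<forall>i<m. orthonormal_basis n (B i)) \<and>
     (\<forall>i<m. \<forall>j<m. i \<noteq> j \<longrightarrow> (\<forall>k<n. \<forall>k'<n. cmod (cinner n (B i k) (B j k')) = 1 / sqrt (real n)))"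

definition closed_path :: "nat \<Rightarrow> nat \<Rightarrow> (nat \<Rightarrow> nat) \<Rightarrow> bool" where
  "closed_path p l \<gamma> \<longleftrightarrow> (\<forall>i\<le>l. \<gamma> i \<in> {1..p}) \<and> \<gamma> 0 = \<gamma> l"

definition Vg :: "nat \<Rightarrow> (nat \<Rightarrow> nat) \<Rightarrow> nat set" where
  "Vg l \<gamma> = \<gamma> ` {0..l}"

definition vg :: "nat \<Rightarrow> (nat \<Rightarrow> nat) \<Rightarrow> nat" where
  "vg l \<gamma> = card (Vg l \<gamma>)"

text \<open>The disjoint union of the bases is indexed by pairs (i,k), i < m, k < n.\<close>
definition omega :: "nat \<Rightarrow> (nat \<Rightarrow> nat \<Rightarrow> nat \<Rightarrow> complex) \<Rightarrow> nat \<Rightarrow> (nat \<Rightarrow> nat)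
    \<Rightarrow> (nat \<Rightarrow> nat \<times> nat) \<Rightarrow> complex" where
  "omega n B l \<gamma> s = (\<Prod>i<l. cinner n (B (fst (s (\<gamma> i))) (snd (s (\<gamma> i))))
                                     (B (fst (s (\<gamma> (Suc i)))) (snd (s (\<gamma> (Suc i))))))"

definition W :: "nat \<Rightarrow> nat \<Rightarrow> (nat \<Rightarrow> nat \<Rightarrow> nat \<Rightarrow> complex) \<Rightarrow> nat \<Rightarrow> (nat \<Rightarrow> nat) \<Rightarrow> complex" where
  "W n m B l \<gamma> =
     (\<Sum>s\<in>(Vg l \<gamma> \<rightarrow>\<^sub>E ({..<m} \<times> {..<n})). omega n B l \<gamma> s)
       / of_nat ((m * n) ^ vg l \<gamma>)"

text \<open>Cyclic words and the two reduction moves.  A list xs represents the cyclic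
  word (indices mod length xs).  del i xs deletes the entry at position i.\<close>
definition del :: "nat \<Rightarrow> 'a list \<Rightarrow> 'a list" where
  "del i xs = take i xs @ drop (Suc i) xs"

inductive reducible :: "nat list \<Rightarrow> bool" where
  base: "length xs = 1 \<Longrightarrow> reducible xs"
| move1a: "\<lbrakk>length xs \<ge> 2; i < length xs; xs ! i = xs ! ((Suc i) mod length xs);
            reducible (del i xs)\<rbrakk> \<Longrightarrow> reducible xs"
| move1b: "\<lbrakk>length xs \<ge> 2; i < length xs; xs ! i = xs ! ((Suc i) mod length xs);
            reducible (del ((Suc i) mod length xs) xs)\<rbrakk> \<Longrightarrow> reducible xs"
| move2: "\<lbrakk>length xs \<ge> 2; i < length xs; length (filter (\<lambda>y. y = xs ! i) xs) = 1;
            reducible (del i xs)\<rbrakk> \<Longrightarrow> reducible xs"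

definition in_Gamma :: "nat \<Rightarrow> (nat \<Rightarrow> nat) \<Rightarrow> bool" where
  "in_Gamma l \<gamma> \<longleftrightarrow> reducible (map \<gamma> [0..<l])"

end

theory Submission
  imports Defs
begin

text \<open>Write \<open>W\<close> as the average, over all colourings \<open>s\<close> of the vertices of the cyclic word by
  basis vectors, of the cyclic product of Gram entries.  Move 1 leaves \<open>W\<close> unchanged, since two
  consecutive equal vertices contribute \<open>\<langle>b,b\<rangle> = 1\<close>.  Move 2 divides \<open>W\<close> by \<open>n\<close>: summing the
  colour of the unique vertex over all \<open>m\<close> bases gives, by Parseval, \<open>m\<close> times the inner product
  of its two neighbours, while the normalisation grows by the factor \<open>m n\<close>.  This yields the
  value on \<open>\<Gamma>\<^sub>l\<close> and, outside \<open>\<Gamma>\<^sub>l\<close>, reduces the bound to words to which no move applies: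
  cyclically adjacent entries differ and every vertex occurs at least twice.  For such a word a
  colouring with \<open>r\<close> colours and \<open>d\<close> colour changes along the cycle contributes at most
  \<open>n\<^sup>-\<^sup>d\<^sup>/\<^sup>2\<close>; every colour class accounts for at least three vertices or colour changes,
  so \<open>3 r \<le> d + v + 1\<close>, and \<open>d \<ge> 2 v\<close> if \<open>r = v\<close>.  With \<open>m \<ge> \<surd>n\<close> this gives
  \<open>(m n)\<^sup>r n\<^sup>-\<^sup>d\<^sup>/\<^sup>2 \<le> m\<^sup>v\<^sup>-\<^sup>1 n + m\<^sup>v\<close>, and there are at most \<open>(m n)\<^sup>r r\<^sup>v\<close> colourings with
  \<open>r\<close> colours.\<close>

section \<open>Cyclic products over lists\<close>

definition cyclic_prod :: "('a \<Rightarrow> 'a \<Rightarrow> 'b::comm_monoid_mult) \<Rightarrow> 'a list \<Rightarrow> 'b" where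
  "cyclic_prod f xs = (\<Prod>i<length xs. f (xs!i) (xs!(Suc i mod length xs)))"

definition path_prod :: "('a \<Rightarrow> 'a \<Rightarrow> 'b::comm_monoid_mult) \<Rightarrow> 'a list \<Rightarrow> 'b" where
  "path_prod f xs = (\<Prod>i<length xs - 1. f (xs!i) (xs!(Suc i)))"

lemma cyclic_prod_rotate1: "cyclic_prod f (rotate1 xs) = cyclic_prod f xs"
proof (cases xs)
  case Nil
  then show ?thesis by simp
next
  case (Cons a zs)
  define L where "L = length xs"
  define h where "h i = f (xs!i) (xs!(Suc i mod L))" for i
  have L: "L = Suc (length zs)" using Cons L_def by simp
  have rot: "rotate1 xs ! i = xs ! (Suc i mod L)" if "i < L" for i
    using nth_rotate1 that L_def by metis
  have "cyclic_prod f (rotate1 xs) = (\<Prod>i<L. f (rotate1 xs ! i) (rotate1 xs ! (Suc i mod L)))"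
    unfolding cyclic_prod_def L_def by simp
  also have "\<dots> = (\<Prod>i<L. h (Suc i mod L))"
    unfolding h_def by (intro prod.cong refl) (simp add: rot L)
  also have "\<dots> = (\<Prod>i<length zs. h (Suc i)) * h 0"
    unfolding L by (simp add: prod.lessThan_Suc)
  also have "\<dots> = (\<Prod>i<L. h i)"
    unfolding L by (subst prod.lessThan_Suc_shift) (simp add: mult.commute del: prod.lessThan_Suc)
  also have "\<dots> = cyclic_prod f xs" unfolding cyclic_prod_def h_def L_def by simp
  finally show ?thesis .
qed

lemma cyclic_prod_rotate: "cyclic_prod f (rotate k xs) = cyclic_prod f xs"
  by (induction k) (simp_all add: cyclic_prod_rotate1)

lemma cyclic_prod_Cons:
  assumes "zs \<noteq> []"
  shows "cyclic_prod f (a # zs) = f a (hd zs) * path_prod f zs * f (last zs) a"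
proof -
  obtain J where J: "length zs = Suc J" using assms by (cases zs) auto
  have path: "path_prod f zs = (\<Prod>i<J. f (zs!i) (zs!(Suc i)))" unfolding path_prod_def J by simp
  have "cyclic_prod f (a # zs)
      = f a (zs!0) * (\<Prod>i<Suc J. f (zs!i) ((a # zs)!(Suc (Suc i) mod Suc (Suc J))))"
    unfolding cyclic_prod_def using J by (simp add: prod.lessThan_Suc_shift del: prod.lessThan_Suc)
  also have "(\<Prod>i<Suc J. f (zs!i) ((a # zs)!(Suc (Suc i) mod Suc (Suc J)))) = path_prod f zs * f (zs!J) a"
    unfolding path by (simp add: prod.lessThan_Suc)
  finally show ?thesis
    using assms J by (simp add: hd_conv_nth last_conv_nth mult.assoc)
qed

lemma cyclic_prod_eq_path_prod:
  assumes "zs \<noteq> []"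
  shows "cyclic_prod f zs = path_prod f zs * f (last zs) (hd zs)"
proof -
  obtain J where J: "length zs = Suc J" using assms by (cases zs) auto
  have "cyclic_prod f zs = (\<Prod>i<Suc J. f (zs!i) (zs!(Suc i mod Suc J)))"
    unfolding cyclic_prod_def J by simp
  also have "\<dots> = path_prod f zs * f (zs!J) (zs!0)"
    unfolding path_prod_def J by (simp add: prod.lessThan_Suc)
  finally show ?thesis using assms J by (simp add: hd_conv_nth last_conv_nth)
qed

lemma path_prod_cong:
  "(\<And>x y. x \<in> set xs \<Longrightarrow> y \<in> set xs \<Longrightarrow> f x y = g x y) \<Longrightarrow> path_prod f xs = path_prod g xs"
  unfolding path_prod_def by (intro prod.cong refl) (simp add: nth_mem)

lemma length_del: "i < length xs \<Longrightarrow> length (del i xs) = length xs - 1"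
  unfolding del_def by simp

lemma length_filter_del:
  assumes "i < length xs"
  shows "length (filter P xs) = length (filter P (del i xs)) + (if P (xs!i) then 1 else 0)"
proof -
  have "xs = take i xs @ xs!i # drop (Suc i) xs" using assms by (rule id_take_nth_drop)
  then have "length (filter P xs) = length (filter P (take i xs @ xs!i # drop (Suc i) xs))"
    by (rule arg_cong)
  then show ?thesis unfolding del_def by simp
qed

lemma rotate_del:
  assumes "i < length xs"
  shows "rotate i xs = xs!i # rotate i (del i xs)"
proof -
  have "rotate i (del i xs) = drop (Suc i) xs @ take i xs"
    unfolding del_def using rotate_append[of "take i xs" "drop (Suc i) xs"] assms by simp
  moreover have "rotate i xs = drop i xs @ take i xs"
    using assms by (simp add: rotate_drop_take)
  ultimately show ?thesis using assms by (simp add: Cons_nth_drop_Suc)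
qed

lemma hd_last_rotate_del:
  assumes i: "i < length xs" and L: "2 \<le> length xs"
  shows "hd (rotate i (del i xs)) = xs ! (Suc i mod length xs)"
    and "last (rotate i (del i xs)) = xs ! ((i + length xs - 1) mod length xs)"
proof -
  define zs where "zs = rotate i (del i xs)"
  have rot: "rotate i xs = xs!i # zs" unfolding zs_def using i by (rule rotate_del)
  have lz: "length zs = length xs - 1" unfolding zs_def using i by (simp add: length_del)
  then have "zs \<noteq> []" using L by auto
  have "hd zs = rotate i xs ! 1" using rot \<open>zs \<noteq> []\<close> by (simp add: hd_conv_nth)
  also have "\<dots> = xs ! (Suc i mod length xs)" using L by (simp add: nth_rotate)
  finally show "hd zs = xs ! (Suc i mod length xs)" .
  have "last zs = rotate i xs ! (length xs - 1)" using rot \<open>zs \<noteq> []\<close> lz L by (simp add: last_conv_nth)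
  also have "\<dots> = xs ! ((i + length xs - 1) mod length xs)" using L by (simp add: nth_rotate)
  finally show "last zs = xs ! ((i + length xs - 1) mod length xs)" .
qed

section \<open>Mutually unbiased bases\<close>

lemma orthonormal_basis_parseval:
  assumes "orthonormal_basis n b"
  shows "(\<Sum>k<n. cinner n w (b k) * cinner n (b k) u) = cinner n w u"
proof -
  obtain c where c: "\<forall>t<n. w t = (\<Sum>k<n. c k * b k t)"
    using assms unfolding orthonormal_basis_def by blast
  have orth: "\<forall>j<n. \<forall>k<n. cinner n (b j) (b k) = (if j = k then 1 else 0)"
    using assms unfolding orthonormal_basis_def by blast
  have expand: "cinner n w v = (\<Sum>k<n. c k * cinner n (b k) v)" for v
  proof -
    have "cinner n w v = (\<Sum>t<n. (\<Sum>k<n. c k * b k t) * cnj (v t))"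
      unfolding cinner_def using c by (intro sum.cong refl) simp
    also have "\<dots> = (\<Sum>k<n. \<Sum>t<n. c k * (b k t * cnj (v t)))"
      by (subst sum.swap) (simp add: sum_distrib_right mult.assoc)
    also have "\<dots> = (\<Sum>k<n. c k * cinner n (b k) v)"
      unfolding cinner_def by (simp add: sum_distrib_left)
    finally show ?thesis .
  qed
  have coeff: "cinner n w (b j) = c j" if "j < n" for j
  proof -
    have "cinner n w (b j) = (\<Sum>k<n. c k * (if k = j then 1 else 0))"
      unfolding expand using orth that by (intro sum.cong refl) simp
    also have "\<dots> = c j" using that by (simp add: if_distrib cong: if_cong)
    finally show ?thesis .
  qed
  show ?thesis unfolding expand[of u] by (intro sum.cong refl) (simp add: coeff)
qed

definition gram :: "nat \<Rightarrow> (nat \<Rightarrow> nat \<Rightarrow> nat \<Rightarrow> complex) \<Rightarrow> nat \<times> nat \<Rightarrow> nat \<times> nat \<Rightarrow> complex" where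
  "gram n B a b = cinner n (B (fst a) (snd a)) (B (fst b) (snd b))"

lemma gram_self:
  assumes "\<forall>i<m. orthonormal_basis n (B i)" "a \<in> {..<m} \<times> {..<n}"
  shows "gram n B a a = 1"
  using assms unfolding gram_def orthonormal_basis_def by auto

lemma norm_gram_le:
  assumes mu: "mutually_unbiased n m B" and a: "a \<in> {..<m} \<times> {..<n}" and b: "b \<in> {..<m} \<times> {..<n}"
  shows "cmod (gram n B a b) \<le> (if a = b then 1 else 1 / sqrt (real n))"
proof (cases "fst a = fst b")
  case True
  then have "gram n B a b = (if a = b then 1 else 0)"
    using mu a b unfolding mutually_unbiased_def orthonormal_basis_def gram_def
    by (auto simp: prod_eq_iff)
  then show ?thesis by simp
next
  case False
  then show ?thesis using mu a b unfolding mutually_unbiased_def gram_def by auto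
qed

section \<open>The average \<open>W\<close> of a cyclic word\<close>

definition W_word :: "nat \<Rightarrow> nat \<Rightarrow> (nat \<Rightarrow> nat \<Rightarrow> nat \<Rightarrow> complex) \<Rightarrow> nat list \<Rightarrow> complex" where
  "W_word n m B xs =
     (\<Sum>s\<in>set xs \<rightarrow>\<^sub>E {..<m} \<times> {..<n}. cyclic_prod (\<lambda>x y. gram n B (s x) (s y)) xs)
       / of_nat ((m * n) ^ card (set xs))"

lemma W_word_rotate: "W_word n m B (rotate k xs) = W_word n m B xs"
  unfolding W_word_def by (simp add: cyclic_prod_rotate)

lemma W_word_Cons_neighbour:
  assumes ons: "\<forall>i<m. orthonormal_basis n (B i)" and zs: "zs \<noteq> []"
    and a: "a = hd zs \<or> a = last zs"
  shows "W_word n m B (a # zs) = W_word n m B zs"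
proof -
  have a_in: "a \<in> set zs" using a zs by auto
  have "cyclic_prod (\<lambda>x y. gram n B (s x) (s y)) (a # zs) = cyclic_prod (\<lambda>x y. gram n B (s x) (s y)) zs"
    if s: "s \<in> set zs \<rightarrow>\<^sub>E {..<m} \<times> {..<n}" for s
  proof -
    have "gram n B (s a) (s a) = 1" using s a_in by (intro gram_self[OF ons]) blast
    then show ?thesis
      unfolding cyclic_prod_Cons[OF zs] cyclic_prod_eq_path_prod[OF zs] using a by (auto simp: mult_ac)
  qed
  moreover have "set (a # zs) = set zs" using a_in by auto
  ultimately show ?thesis unfolding W_word_def by simp
qed

lemma sum_cyclic_prod_gram_fresh:
  assumes ons: "\<forall>i<m. orthonormal_basis n (B i)" and zs: "zs \<noteq> []" and a: "a \<notin> set zs"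
  shows "(\<Sum>y\<in>{..<m} \<times> {..<n}. cyclic_prod (\<lambda>x x'. gram n B ((s(a := y)) x) ((s(a := y)) x')) (a # zs))
    = of_nat m * cyclic_prod (\<lambda>x x'. gram n B (s x) (s x')) zs"
proof -
  define w where "w = B (fst (s (last zs))) (snd (s (last zs)))"
  define u where "u = B (fst (s (hd zs))) (snd (s (hd zs)))"
  have "hd zs \<noteq> a" "last zs \<noteq> a" using zs a by auto
  moreover have "path_prod (\<lambda>x x'. gram n B ((s(a := y)) x) ((s(a := y)) x')) zs
      = path_prod (\<lambda>x x'. gram n B (s x) (s x')) zs" for y
    by (rule path_prod_cong) (use a in auto)
  ultimately have "cyclic_prod (\<lambda>x x'. gram n B ((s(a := y)) x) ((s(a := y)) x')) (a # zs)
      = path_prod (\<lambda>x x'. gram n B (s x) (s x')) zs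
        * (cinner n w (B (fst y) (snd y)) * cinner n (B (fst y) (snd y)) u)" for y
    unfolding cyclic_prod_Cons[OF zs] by (simp add: gram_def u_def w_def mult_ac)
  then have "(\<Sum>y\<in>{..<m} \<times> {..<n}. cyclic_prod (\<lambda>x x'. gram n B ((s(a := y)) x) ((s(a := y)) x')) (a # zs))
      = path_prod (\<lambda>x x'. gram n B (s x) (s x')) zs
        * (\<Sum>i<m. \<Sum>k<n. cinner n w (B i k) * cinner n (B i k) u)"
    by (simp add: sum_distrib_left sum.cartesian_product case_prod_beta)
  also have "(\<Sum>i<m. \<Sum>k<n. cinner n w (B i k) * cinner n (B i k) u) = of_nat m * cinner n w u"
    using ons by (simp add: orthonormal_basis_parseval)
  finally show ?thesis
    unfolding cyclic_prod_eq_path_prod[OF zs] by (simp add: gram_def u_def w_def mult_ac)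
qed

lemma W_word_Cons_fresh:
  assumes ons: "\<forall>i<m. orthonormal_basis n (B i)" and zs: "zs \<noteq> []" and a: "a \<notin> set zs"
  shows "W_word n m B (a # zs) = W_word n m B zs / of_nat n"
proof -
  define A where "A = {..<m} \<times> {..<n}"
  define V where "V = set zs"
  define F where "F s = (\<lambda>x y. gram n B (s x) (s y))" for s :: "nat \<Rightarrow> nat \<times> nat"
  have aV: "a \<notin> V" using a V_def by simp
  have "(\<Sum>s\<in>insert a V \<rightarrow>\<^sub>E A. cyclic_prod (F s) (a # zs))
      = (\<Sum>(y, g)\<in>A \<times> (V \<rightarrow>\<^sub>E A). cyclic_prod (F (g(a := y))) (a # zs))"
    unfolding PiE_insert_eq
    by (subst sum.reindex[OF inj_combinator[OF aV]]) (simp add: case_prod_unfold)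
  also have "\<dots> = (\<Sum>y\<in>A. \<Sum>g\<in>V \<rightarrow>\<^sub>E A. cyclic_prod (F (g(a := y))) (a # zs))"
    by (simp add: sum.cartesian_product)
  also have "\<dots> = (\<Sum>g\<in>V \<rightarrow>\<^sub>E A. \<Sum>y\<in>A. cyclic_prod (F (g(a := y))) (a # zs))"
    by (rule sum.swap)
  also have "\<dots> = of_nat m * (\<Sum>g\<in>V \<rightarrow>\<^sub>E A. cyclic_prod (F g) zs)"
    unfolding A_def F_def sum_cyclic_prod_gram_fresh[OF ons zs a] by (simp add: sum_distrib_left)
  finally have sum: "(\<Sum>s\<in>insert a V \<rightarrow>\<^sub>E A. cyclic_prod (F s) (a # zs))
      = of_nat m * (\<Sum>g\<in>V \<rightarrow>\<^sub>E A. cyclic_prod (F g) zs)" .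
  have card: "card (set (a # zs)) = Suc (card V)" using aV V_def by simp
  show ?thesis
  proof (cases "m = 0")
    case True
    then show ?thesis using zs unfolding W_word_def by (simp add: power_0_left)
  next
    case False
    then show ?thesis unfolding W_word_def card
      unfolding A_def[symmetric] V_def[symmetric] F_def[symmetric] set_simps sum
      by (simp add: field_simps)
  qed
qed

lemma W_word_del_neighbour:
  assumes ons: "\<forall>i<m. orthonormal_basis n (B i)" and i: "i < length xs" and L: "2 \<le> length xs"
    and nb: "xs!i = xs!(Suc i mod length xs) \<or> xs!i = xs!((i + length xs - 1) mod length xs)"
  shows "W_word n m B (del i xs) = W_word n m B xs" and "set (del i xs) = set xs"
proof -
  define zs where "zs = rotate i (del i xs)"
  have rot: "rotate i xs = xs!i # zs" unfolding zs_def using i by (rule rotate_del)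
  have "length zs = length xs - 1" unfolding zs_def using i by (simp add: length_del)
  then have "zs \<noteq> []" using L by auto
  moreover have "xs!i = hd zs \<or> xs!i = last zs"
    unfolding zs_def hd_last_rotate_del[OF i L] using nb .
  ultimately have "W_word n m B (xs!i # zs) = W_word n m B zs" "xs!i \<in> set zs"
    using W_word_Cons_neighbour[OF ons] by auto
  moreover have "set xs = insert (xs!i) (set zs)" using arg_cong[OF rot, of set] by simp
  ultimately show "W_word n m B (del i xs) = W_word n m B xs" "set (del i xs) = set xs"
    using W_word_rotate[of n m B i] rot unfolding zs_def by (metis, auto)
qed

lemma W_word_del_fresh:
  assumes ons: "\<forall>i<m. orthonormal_basis n (B i)" and i: "i < length xs" and L: "2 \<le> length xs"
    and unique: "length (filter (\<lambda>y. y = xs!i) xs) = 1"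
  shows "W_word n m B xs = W_word n m B (del i xs) / of_nat n"
    and "card (set xs) = Suc (card (set (del i xs)))"
proof -
  define zs where "zs = rotate i (del i xs)"
  have rot: "rotate i xs = xs!i # zs" unfolding zs_def using i by (rule rotate_del)
  have "length zs = length xs - 1" unfolding zs_def using i by (simp add: length_del)
  then have "zs \<noteq> []" using L by auto
  have "length (filter (\<lambda>y. y = xs!i) (del i xs)) = 0"
    using length_filter_del[OF i, of "\<lambda>y. y = xs!i"] unique by simp
  then have fresh: "xs!i \<notin> set zs" unfolding zs_def by (auto simp: filter_empty_conv)
  show "W_word n m B xs = W_word n m B (del i xs) / of_nat n"
    using W_word_Cons_fresh[OF ons \<open>zs \<noteq> []\<close> fresh] W_word_rotate[of n m B i] rot
    unfolding zs_def by metis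
  show "card (set xs) = Suc (card (set (del i xs)))"
    using arg_cong[OF rot, of set] fresh unfolding zs_def by simp
qed

text \<open>Rescaling by \<open>n\<^sup>v\<^sup>-\<^sup>1\<close> makes both moves invariants.\<close>

definition W_scaled :: "nat \<Rightarrow> nat \<Rightarrow> (nat \<Rightarrow> nat \<Rightarrow> nat \<Rightarrow> complex) \<Rightarrow> nat list \<Rightarrow> complex" where
  "W_scaled n m B xs = of_real (real n powr (real (card (set xs)) - 1)) * W_word n m B xs"

lemma W_word_eq_W_scaled:
  assumes "0 < n"
  shows "W_word n m B xs = of_real (real n powr (1 - real (card (set xs)))) * W_scaled n m B xs"
proof -
  have "real n powr (1 - real (card (set xs))) * real n powr (real (card (set xs)) - 1) = 1"
    using assms by (simp add: powr_add[symmetric])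
  then show ?thesis unfolding W_scaled_def by (simp flip: of_real_mult)
qed

lemma W_scaled_del_neighbour:
  assumes "\<forall>i<m. orthonormal_basis n (B i)" "i < length xs" "2 \<le> length xs"
    "xs!i = xs!(Suc i mod length xs) \<or> xs!i = xs!((i + length xs - 1) mod length xs)"
  shows "W_scaled n m B (del i xs) = W_scaled n m B xs"
  using W_word_del_neighbour[OF assms] unfolding W_scaled_def by simp

lemma W_scaled_del_fresh:
  assumes "\<forall>i<m. orthonormal_basis n (B i)" "0 < n" "i < length xs" "2 \<le> length xs"
    "length (filter (\<lambda>y. y = xs!i) xs) = 1"
  shows "W_scaled n m B (del i xs) = W_scaled n m B xs"
proof -
  define k where "k = card (set (del i xs))"
  note fresh = W_word_del_fresh[OF assms(1,3-5), folded k_def]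
  have "real (Suc k) - 1 = (real k - 1) + 1" by simp
  then have "real n powr (real (Suc k) - 1) = real n powr (real k - 1) * real n"
    using assms(2) by (simp only: powr_add) simp
  then show ?thesis unfolding W_scaled_def fresh k_def[symmetric] using assms(2) by simp
qed

lemma W_scaled_reducible:
  assumes ons: "\<forall>i<m. orthonormal_basis n (B i)" and n: "0 < n" and m: "0 < m"
  shows "reducible xs \<Longrightarrow> W_scaled n m B xs = 1"
proof (induction rule: reducible.induct)
  case (base xs)
  then obtain a where xs: "xs = [a]" by (cases xs) auto
  have "cyclic_prod (\<lambda>x y. gram n B (s x) (s y)) [a] = 1" if "s \<in> {a} \<rightarrow>\<^sub>E {..<m} \<times> {..<n}" for s
  proof -
    have "s a \<in> {..<m} \<times> {..<n}" using that by blast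
    then show ?thesis unfolding cyclic_prod_def by (simp add: gram_self[OF ons])
  qed
  then show ?case
    unfolding xs W_scaled_def W_word_def using n m by (simp add: card_PiE card_cartesian_product)
next
  case (move1a xs i)
  then show ?case using W_scaled_del_neighbour[OF ons move1a(2,1)] by simp
next
  case (move1b xs i)
  define j where "j = Suc i mod length xs"
  have j: "j < length xs" unfolding j_def using move1b(1) by (intro mod_less_divisor) linarith
  have "(j + length xs - 1) mod length xs = i"
    unfolding j_def using move1b(2) by (cases "Suc i = length xs") simp_all
  then have "xs!j = xs!((j + length xs - 1) mod length xs)" using move1b(3) j_def by simp
  then show ?case using W_scaled_del_neighbour[OF ons j move1b(1)] move1b(5) j_def by simp
next
  case (move2 xs i)
  then show ?case using W_scaled_del_fresh[OF ons n move2(2,1,3)] by simp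
qed

section \<open>Words to which no move applies\<close>

definition colour_changes :: "('a \<Rightarrow> 'b) \<Rightarrow> 'a list \<Rightarrow> nat set" where
  "colour_changes s xs = {i. i < length xs \<and> s (xs!i) \<noteq> s (xs!(Suc i mod length xs))}"

lemma nth_Suc_mod_in_set:
  assumes "i < length xs"
  shows "xs!(Suc i mod length xs) \<in> set xs"
proof -
  have "0 < length xs" using assms by linarith
  then show ?thesis by (simp add: nth_mem)
qed

lemma cyclic_exit:
  assumes "j < L" "P j" "k < L" "\<not> P k"
  shows "\<exists>i<L. P i \<and> \<not> P (Suc i mod L)"
proof (rule ccontr)
  assume "\<not> ?thesis"
  then have step: "\<And>i. i < L \<Longrightarrow> P i \<Longrightarrow> P (Suc i mod L)" by blast
  have "P ((j + t) mod L)" for t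
  proof (induction t)
    case 0
    then show ?case using assms by simp
  next
    case (Suc t)
    have "P (Suc ((j + t) mod L) mod L)" using step Suc assms(1) by simp
    then show ?case by (simp add: mod_Suc_eq)
  qed
  from this[of "L - j + k"] show False using assms by simp
qed

lemma count_list_conv_card: "count_list xs x = card {i. i < length xs \<and> xs!i = x}"
  by (simp add: count_list_eq_length_filter length_filter_conv_card eq_commute)

lemma two_le_card_set:
  assumes L: "2 \<le> length xs" and adj: "\<forall>i<length xs. xs!i \<noteq> xs!(Suc i mod length xs)"
  shows "2 \<le> card (set xs)"
proof -
  have "xs \<noteq> []" using L by auto
  then have "xs!0 \<noteq> xs!1" using adj[rule_format, of 0] L by simp
  moreover have "{xs!0, xs!1} \<subseteq> set xs" using L by (auto intro!: nth_mem)
  ultimately show ?thesis using card_mono[of "set xs" "{xs!0, xs!1}"] by simp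
qed

lemma twice_card_set_le_length:
  assumes "\<forall>x\<in>set xs. 2 \<le> count_list xs x"
  shows "2 * card (set xs) \<le> length xs"
proof -
  have "2 * card (set xs) = (\<Sum>x\<in>set xs. 2)" by simp
  also have "\<dots> \<le> (\<Sum>x\<in>set xs. count_list xs x)" using assms by (intro sum_mono) auto
  also have "\<dots> = length xs" by (rule sum_count_set) simp_all
  finally show ?thesis .
qed

lemma colour_changes_inj_on:
  assumes adj: "\<forall>i<length xs. xs!i \<noteq> xs!(Suc i mod length xs)" and inj: "inj_on s (set xs)"
  shows "colour_changes s xs = {..<length xs}"
proof -
  have "s (xs!i) \<noteq> s (xs!(Suc i mod length xs))" if i: "i < length xs" for i
  proof
    assume "s (xs!i) = s (xs!(Suc i mod length xs))"
    then have "xs!i = xs!(Suc i mod length xs)"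
      using inj_onD[OF inj] i by (simp add: nth_Suc_mod_in_set)
    then show False using adj i by blast
  qed
  then show ?thesis unfolding colour_changes_def by auto
qed

lemma colour_class_left:
  assumes y: "y \<in> s ` set xs" and other: "s ` set xs \<noteq> {y}"
  shows "\<exists>i\<in>colour_changes s xs. s (xs!i) = y"
proof -
  obtain x0 where "x0 \<in> set xs" "s x0 = y" using y by blast
  then obtain j where j: "j < length xs" "s (xs!j) = y" by (metis in_set_conv_nth)
  obtain z where "z \<in> set xs" "s z \<noteq> y" using y other by blast
  then obtain k where k: "k < length xs" "s (xs!k) \<noteq> y" by (metis in_set_conv_nth)
  from cyclic_exit[of j "length xs" "\<lambda>i. s (xs!i) = y" k] j k show ?thesis
    unfolding colour_changes_def by auto
qed

text \<open>A colour class with a single vertex \<open>x\<^sub>0\<close> is left at each of the at least two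
  occurrences of \<open>x\<^sub>0\<close>, because cyclically adjacent entries differ.\<close>

lemma three_le_fibre_plus_colour_changes:
  assumes adj: "\<forall>i<length xs. xs!i \<noteq> xs!(Suc i mod length xs)"
    and twice: "\<forall>x\<in>set xs. 2 \<le> count_list xs x"
    and y: "y \<in> s ` set xs" and other: "s ` set xs \<noteq> {y}"
  shows "3 \<le> card {x \<in> set xs. s x = y} + card {i \<in> colour_changes s xs. s (xs!i) = y}"
proof -
  define L where "L = length xs"
  define fibre where "fibre = {x \<in> set xs. s x = y}"
  define exits where "exits = {i \<in> colour_changes s xs. s (xs!i) = y}"
  have fin: "finite fibre" "finite exits" unfolding fibre_def exits_def colour_changes_def by auto
  obtain x0 where x0: "x0 \<in> set xs" "s x0 = y" using y by blast
  have "exits \<noteq> {}" using colour_class_left[OF y other] unfolding exits_def by blast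
  then have exits1: "0 < card exits" using fin by (simp add: card_gt_0_iff)
  have "x0 \<in> fibre" using x0 unfolding fibre_def by simp
  then have fibre1: "0 < card fibre" using fin by (auto simp: card_gt_0_iff)
  show ?thesis
  proof (cases "2 \<le> card fibre")
    case True
    then show ?thesis using exits1 unfolding fibre_def exits_def by linarith
  next
    case False
    then have "card fibre = 1" using fibre1 by linarith
    then obtain z where "fibre = {z}" by (rule card_1_singletonE)
    then have fibre: "fibre = {x0}" using \<open>x0 \<in> fibre\<close> by simp
    have "t \<in> exits" if t: "t < L" "xs!t = x0" for t
    proof -
      have "xs!(Suc t mod L) \<noteq> x0" using adj t unfolding L_def by auto
      then have "xs!(Suc t mod L) \<notin> fibre" using fibre by simp
      then have "s (xs!(Suc t mod L)) \<noteq> y"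
        using nth_Suc_mod_in_set[of t xs] t unfolding fibre_def L_def by simp
      then show ?thesis using t x0 unfolding exits_def colour_changes_def L_def by simp
    qed
    then have "{t. t < L \<and> xs!t = x0} \<subseteq> exits" by blast
    then have "count_list xs x0 \<le> card exits"
      unfolding count_list_conv_card L_def using card_mono[OF fin(2)] by blast
    then show ?thesis using twice x0(1) fibre1 unfolding fibre_def exits_def by force
  qed
qed

lemma card_image_le_colour_changes:
  assumes L: "2 \<le> length xs" and adj: "\<forall>i<length xs. xs!i \<noteq> xs!(Suc i mod length xs)"
    and twice: "\<forall>x\<in>set xs. 2 \<le> count_list xs x"
  shows "3 * card (s ` set xs) \<le> card (colour_changes s xs) + card (set xs) + 1"
proof (cases "card (s ` set xs) \<le> 1")
  case True
  then show ?thesis using two_le_card_set[OF L adj] by linarith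
next
  case False
  define R where "R = s ` set xs"
  have fin: "finite R" "finite (colour_changes s xs)" unfolding R_def colour_changes_def by auto
  have not_single: "R \<noteq> {y}" for y using False unfolding R_def by auto
  have "3 * card R = (\<Sum>y\<in>R. 3)" by simp
  also have "\<dots> \<le> (\<Sum>y\<in>R. card {x \<in> set xs. s x = y} + card {i \<in> colour_changes s xs. s (xs!i) = y})"
    using three_le_fibre_plus_colour_changes[OF adj twice, where s = s] not_single
    unfolding R_def by (intro sum_mono) blast
  also have "\<dots> = card (set xs) + card (colour_changes s xs)"
  proof -
    have "(\<Sum>y\<in>R. card {x \<in> set xs. s x = y}) = card (set xs)"
      using sum.group[OF _ fin(1), of "set xs" s "\<lambda>_. 1::nat"] unfolding R_def by simp
    moreover have "(\<lambda>i. s (xs!i)) ` colour_changes s xs \<subseteq> R"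
      unfolding R_def colour_changes_def by auto
    then have "(\<Sum>y\<in>R. card {i \<in> colour_changes s xs. s (xs!i) = y}) = card (colour_changes s xs)"
      using sum.group[OF fin(2) fin(1), of "\<lambda>i. s (xs!i)" "\<lambda>_. 1::nat"] by simp
    ultimately show ?thesis by (simp add: sum.distrib)
  qed
  finally show ?thesis unfolding R_def by linarith
qed

text \<open>Here \<open>q = \<surd>n\<close>, \<open>r\<close> is the number of colours, \<open>v\<close> the number of vertices and \<open>d\<close> the
  number of colour changes.\<close>

lemma colouring_weight_le:
  fixes q :: real
  assumes q1: "1 \<le> q" and qn: "q^2 = real n" and qm: "q \<le> real m" and rv: "r \<le> v"
    and changes: "3 * r \<le> d + v + 1" and inj: "r = v \<Longrightarrow> 2 * v \<le> d"
  shows "(real m * real n)^r \<le> (real m^(v-1) * real n + real m^v) * q^d"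
proof -
  have mn: "(real m * real n)^r = real m^r * q^(2*r)"
    using qn by (simp add: power_mult power_mult_distrib)
  show ?thesis
  proof (cases "r = v")
    case True
    have "q^(2*r) \<le> q^d" using inj True q1 by (intro power_increasing) auto
    then have "real m^r * q^(2*r) \<le> real m^v * q^d" using True by (simp add: mult_left_mono)
    also have "\<dots> \<le> (real m^(v-1) * real n + real m^v) * q^d" using q1 by (intro mult_right_mono) auto
    finally show ?thesis using mn by simp
  next
    case False
    then have rv: "r < v" using rv by simp
    have "q^(2*r) \<le> q^((v-1-r) + 2 + d)" using q1 changes rv by (intro power_increasing) auto
    also have "\<dots> = q^(v-1-r) * q^2 * q^d" by (simp only: power_add)
    also have "\<dots> \<le> real m^(v-1-r) * real n * q^d"
    proof -
      have "q^(v-1-r) \<le> real m^(v-1-r)" using q1 qm by (intro power_mono) auto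
      then show ?thesis using q1 unfolding qn by (intro mult_right_mono) auto
    qed
    finally have "real m^r * q^(2*r) \<le> real m^r * (real m^(v-1-r) * real n * q^d)"
      by (intro mult_left_mono) auto
    also have "\<dots> = real m^(v-1) * real n * q^d"
      using rv by (simp add: power_add[symmetric] mult_ac)
    also have "\<dots> \<le> (real m^(v-1) * real n + real m^v) * q^d" using q1 by (intro mult_right_mono) auto
    finally show ?thesis using mn by simp
  qed
qed

lemma inverse_sqrt_power_colour_changes_le:
  assumes n: "0 < n" and m: "sqrt (real n) \<le> real m"
    and L: "2 \<le> length xs" and adj: "\<forall>i<length xs. xs!i \<noteq> xs!(Suc i mod length xs)"
    and twice: "\<forall>x\<in>set xs. 2 \<le> count_list xs x"
  shows "(1 / sqrt (real n)) ^ card (colour_changes s xs)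
    \<le> (real m^(card (set xs) - 1) * real n + real m^card (set xs)) / (real m * real n)^card (s ` set xs)"
proof -
  define q where "q = sqrt (real n)"
  define d where "d = card (colour_changes s xs)"
  have q1: "1 \<le> q" unfolding q_def using n by simp
  have inj: "2 * card (set xs) \<le> d" if "card (s ` set xs) = card (set xs)"
  proof -
    have "inj_on s (set xs)" using that by (simp add: inj_on_iff_eq_card)
    then have "colour_changes s xs = {..<length xs}" by (rule colour_changes_inj_on[OF adj])
    then show ?thesis unfolding d_def using twice_card_set_le_length[OF twice] by simp
  qed
  have "(real m * real n)^card (s ` set xs) \<le> (real m^(card (set xs) - 1) * real n + real m^card (set xs)) * q^d"
  proof (rule colouring_weight_le[OF q1 _ _ card_image_le[OF finite_set] _ inj])
    show "q^2 = real n" "q \<le> real m" unfolding q_def using m by simp_all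
    show "3 * card (s ` set xs) \<le> d + card (set xs) + 1"
      unfolding d_def by (rule card_image_le_colour_changes[OF L adj twice])
  qed
  moreover have "0 < real m" using m q1 unfolding q_def by linarith
  ultimately show ?thesis
    using q1 n unfolding q_def[symmetric] d_def[symmetric] by (simp add: field_simps power_one_over)
qed

lemma norm_cyclic_prod_gram_le:
  assumes mu: "mutually_unbiased n m B" and s: "\<forall>x\<in>set xs. s x \<in> {..<m} \<times> {..<n}"
  shows "cmod (cyclic_prod (\<lambda>x y. gram n B (s x) (s y)) xs) \<le> (1 / sqrt (real n)) ^ card (colour_changes s xs)"
proof -
  define L where "L = length xs"
  have "cmod (cyclic_prod (\<lambda>x y. gram n B (s x) (s y)) xs)
      = (\<Prod>i<L. cmod (gram n B (s (xs!i)) (s (xs!(Suc i mod L)))))"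
    unfolding cyclic_prod_def L_def by (simp add: prod_norm)
  also have "\<dots> \<le> (\<Prod>i<L. if i \<in> colour_changes s xs then 1 / sqrt (real n) else 1)"
  proof (intro prod_mono conjI)
    fix i assume "i \<in> {..<L}"
    then have "s (xs!i) \<in> {..<m} \<times> {..<n}" "s (xs!(Suc i mod L)) \<in> {..<m} \<times> {..<n}"
      using s nth_Suc_mod_in_set[of i xs] unfolding L_def by auto
    from norm_gram_le[OF mu this]
    show "cmod (gram n B (s (xs!i)) (s (xs!(Suc i mod L))))
        \<le> (if i \<in> colour_changes s xs then 1 / sqrt (real n) else 1)"
      using \<open>i \<in> {..<L}\<close> unfolding colour_changes_def L_def by auto
  qed simp
  also have "\<dots> = (1 / sqrt (real n)) ^ card (colour_changes s xs)"
    unfolding L_def colour_changes_def by (simp add: prod.inter_filter[symmetric])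
  finally show ?thesis .
qed

lemma card_PiE_card_image_le:
  assumes "finite V" "finite A"
  shows "card {s \<in> V \<rightarrow>\<^sub>E A. card (s ` V) = r} \<le> card A ^ r * r ^ card V"
proof -
  define T where "T = {T. T \<subseteq> A \<and> card T = r}"
  have fin: "finite T" unfolding T_def using assms(2) by simp
  have "{s \<in> V \<rightarrow>\<^sub>E A. card (s ` V) = r} \<subseteq> (\<Union>T\<in>T. V \<rightarrow>\<^sub>E T)"
  proof
    fix s assume s: "s \<in> {s \<in> V \<rightarrow>\<^sub>E A. card (s ` V) = r}"
    then have "s \<in> V \<rightarrow>\<^sub>E s ` V" "s ` V \<subseteq> A" by (auto simp: PiE_def)
    then show "s \<in> (\<Union>T\<in>T. V \<rightarrow>\<^sub>E T)" using s unfolding T_def by blast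
  qed
  then have "card {s \<in> V \<rightarrow>\<^sub>E A. card (s ` V) = r} \<le> card (\<Union>T\<in>T. V \<rightarrow>\<^sub>E T)"
    by (rule card_mono[rotated]) (use fin assms in \<open>auto simp: T_def intro!: finite_PiE dest: finite_subset\<close>)
  also have "\<dots> \<le> (\<Sum>T\<in>T. card (V \<rightarrow>\<^sub>E T))" by (rule card_UN_le[OF fin])
  also have "\<dots> = (card A choose r) * r ^ card V"
    using assms n_subsets[OF assms(2)] unfolding T_def by (simp add: card_PiE)
  also have "\<dots> \<le> card A ^ r * r ^ card V"
    by (cases "r \<le> card A") (simp_all add: binomial_le_pow binomial_eq_0)
  finally show ?thesis .
qed

lemma sum_PiE_inverse_power_card_image_le:
  assumes V: "finite V" and A: "finite A" "A \<noteq> {}"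
  shows "(\<Sum>s\<in>V \<rightarrow>\<^sub>E A. 1 / real (card A) ^ card (s ` V)) \<le> real ((card V + 1) * card V ^ card V)"
proof -
  have "(\<lambda>s. card (s ` V)) ` (V \<rightarrow>\<^sub>E A) \<subseteq> {..card V}" using card_image_le[OF V] by auto
  then have "(\<Sum>s\<in>V \<rightarrow>\<^sub>E A. 1 / real (card A) ^ card (s ` V))
      = (\<Sum>r\<le>card V. \<Sum>s\<in>{s \<in> V \<rightarrow>\<^sub>E A. card (s ` V) = r}. 1 / real (card A) ^ r)"
    by (subst sum.group[symmetric, OF finite_PiE[OF V A(1)]]) (auto intro!: sum.cong)
  also have "\<dots> \<le> (\<Sum>r\<le>card V. real (card V ^ card V))"
  proof (intro sum_mono)
    fix r assume r: "r \<in> {..card V}"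
    have "real (card {s \<in> V \<rightarrow>\<^sub>E A. card (s ` V) = r}) / real (card A) ^ r
        \<le> real (card A ^ r * r ^ card V) / real (card A) ^ r"
      by (rule divide_right_mono[OF of_nat_mono[OF card_PiE_card_image_le[OF V A(1)]]]) simp
    also have "\<dots> \<le> real (card V ^ card V)"
      using r A by (simp add: power_mono card_gt_0_iff)
    finally show "(\<Sum>s\<in>{s \<in> V \<rightarrow>\<^sub>E A. card (s ` V) = r}. 1 / real (card A) ^ r) \<le> real (card V ^ card V)"
      by simp
  qed
  also have "\<dots> = real ((card V + 1) * card V ^ card V)" by (simp add: algebra_simps)
  finally show ?thesis .
qed

lemma norm_W_scaled_le_no_move:
  assumes mu: "mutually_unbiased n m B" and n: "0 < n" and m: "sqrt (real n) \<le> real m"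
    and L: "2 \<le> length xs" and adj: "\<forall>i<length xs. xs!i \<noteq> xs!(Suc i mod length xs)"
    and twice: "\<forall>x\<in>set xs. 2 \<le> count_list xs x"
  shows "cmod (W_scaled n m B xs)
    \<le> real ((card (set xs) + 1) * card (set xs) ^ card (set xs)) * (1 / real m + 1 / real n)"
proof -
  define v where "v = card (set xs)"
  define A where "A = {..<m} \<times> {..<n}"
  define M where "M = real m^(v-1) * real n + real m^v"
  define K where "K = real ((v + 1) * v ^ v)"
  have "1 \<le> sqrt (real n)" using n by simp
  then have m0: "0 < m" using m by linarith
  have cardA: "card A = m * n" unfolding A_def by (simp add: card_cartesian_product)
  have "cmod (\<Sum>s\<in>set xs \<rightarrow>\<^sub>E A. cyclic_prod (\<lambda>x y. gram n B (s x) (s y)) xs)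
      \<le> (\<Sum>s\<in>set xs \<rightarrow>\<^sub>E A. M * (1 / real (card A) ^ card (s ` set xs)))"
  proof (rule order_trans[OF norm_sum sum_mono])
    fix s assume "s \<in> set xs \<rightarrow>\<^sub>E A"
    then have "\<forall>x\<in>set xs. s x \<in> {..<m} \<times> {..<n}" unfolding A_def by blast
    from order_trans[OF norm_cyclic_prod_gram_le[OF mu this]
        inverse_sqrt_power_colour_changes_le[OF n m L adj twice]]
    show "cmod (cyclic_prod (\<lambda>x y. gram n B (s x) (s y)) xs) \<le> M * (1 / real (card A) ^ card (s ` set xs))"
      unfolding M_def v_def cardA by simp
  qed
  also have "\<dots> \<le> M * K"
    unfolding sum_distrib_left[symmetric] K_def v_def M_def A_def
    using m0 n by (intro mult_left_mono sum_PiE_inverse_power_card_image_le) auto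
  finally have "cmod (W_scaled n m B xs) \<le> real n powr (real v - 1) * (M * K / (real m * real n) ^ v)"
    unfolding W_scaled_def W_word_def A_def[symmetric] v_def[symmetric]
    by (simp add: norm_mult norm_divide norm_power divide_right_mono mult_left_mono)
  also have "\<dots> = K * (1 / real m + 1 / real n)"
  proof -
    obtain w where w: "v = Suc w" using two_le_card_set[OF L adj] unfolding v_def
      by (metis Suc_le_D numeral_2_eq_2)
    have "real n powr (real v - 1) = real n ^ w" unfolding w using n by (simp add: powr_realpow)
    then show ?thesis unfolding M_def w using m0 n by (simp add: field_simps power_mult_distrib)
  qed
  finally show ?thesis unfolding K_def v_def .
qed

lemma Suc_power_Suc_mono: "k \<le> l \<Longrightarrow> (k + 1) ^ (k + 1) \<le> (l + 1) ^ (l + 1 :: nat)"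
  by (rule order_trans[OF power_mono power_increasing]) auto

lemma cyclic_word_cases:
  obtains (adjacent) i where "i < length xs" "xs!i = xs!(Suc i mod length xs)"
  | (unique) i where "i < length xs" "length (filter (\<lambda>y. y = xs!i) xs) = 1"
  | (no_move) "\<forall>i<length xs. xs!i \<noteq> xs!(Suc i mod length xs)" "\<forall>x\<in>set xs. 2 \<le> count_list xs x"
proof -
  have "2 \<le> count_list xs x"
    if "\<forall>i<length xs. length (filter (\<lambda>y. y = xs!i) xs) \<noteq> 1" "x \<in> set xs" for x
  proof -
    obtain i where "i < length xs" "xs!i = x" using \<open>x \<in> set xs\<close> by (metis in_set_conv_nth)
    moreover have "count_list xs x = length (filter (\<lambda>y. y = x) xs)" by (induction xs) auto
    ultimately have "count_list xs x \<noteq> 1" using that(1) by auto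
    moreover have "count_list xs x \<noteq> 0" using \<open>x \<in> set xs\<close> by (simp add: count_list_0_iff)
    ultimately show ?thesis by linarith
  qed
  then show thesis using that by blast
qed

lemma norm_W_scaled_le_irreducible:
  assumes mu: "mutually_unbiased n m B" and n: "0 < n" and m: "sqrt (real n) \<le> real m"
  shows "\<not> reducible xs \<Longrightarrow> xs \<noteq> [] \<Longrightarrow>
    cmod (W_scaled n m B xs) \<le> real ((length xs + 1) ^ (length xs + 1)) * (1 / real m + 1 / real n)"
proof (induction "length xs" arbitrary: xs rule: less_induct)
  case less
  define L where "L = length xs"
  define Y where "Y = 1 / real m + 1 / real n"
  have ons: "\<forall>i<m. orthonormal_basis n (B i)" using mu unfolding mutually_unbiased_def by blast
  have L: "2 \<le> L"
  proof (rule ccontr)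
    assume "\<not> 2 \<le> L"
    moreover have "0 < L" using less.prems(2) unfolding L_def by simp
    ultimately have "length xs = 1" unfolding L_def by linarith
    then show False using less.prems(1) reducible.base by blast
  qed
  have L_pow: "L ^ L \<le> (L + 1) ^ (L + 1)" using Suc_power_Suc_mono[of "L - 1" L] L by simp
  have by_deletion: "cmod (W_scaled n m B xs) \<le> real ((L + 1) ^ (L + 1)) * Y"
    if "i < L" "\<not> reducible (del i xs)" "W_scaled n m B (del i xs) = W_scaled n m B xs" for i
  proof -
    have len: "length (del i xs) + 1 = L" using length_del[of i xs] that(1) L unfolding L_def by simp
    then have "length (del i xs) < length xs" "del i xs \<noteq> []" using L unfolding L_def by auto
    from less.hyps[OF this(1) that(2) this(2)]
    have "cmod (W_scaled n m B xs) \<le> real (L ^ L) * Y" unfolding len that(3) Y_def .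
    also have "\<dots> \<le> real ((L + 1) ^ (L + 1)) * Y"
      using L_pow unfolding Y_def by (intro mult_right_mono of_nat_mono) simp_all
    finally show ?thesis .
  qed
  from cyclic_word_cases[of xs] have "cmod (W_scaled n m B xs) \<le> real ((L + 1) ^ (L + 1)) * Y"
  proof cases
    case (adjacent i)
    then show ?thesis
      using by_deletion[of i] less.prems(1) reducible.move1a[of xs i] L
        W_scaled_del_neighbour[OF ons, of i xs] unfolding L_def by auto
  next
    case (unique i)
    then show ?thesis
      using by_deletion[of i] less.prems(1) reducible.move2[of xs i] L
        W_scaled_del_fresh[OF ons n, of i xs] unfolding L_def by auto
  next
    case no_move
    define v where "v = card (set xs)"
    have "v \<le> L" unfolding v_def L_def by (rule card_length)
    have "(v + 1) * v ^ v \<le> (v + 1) * (v + 1) ^ v" by (intro mult_le_mono2 power_mono) simp_all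
    also have "\<dots> \<le> (L + 1) ^ (L + 1)" using Suc_power_Suc_mono[OF \<open>v \<le> L\<close>] by simp
    finally have "real ((v + 1) * v ^ v) * Y \<le> real ((L + 1) ^ (L + 1)) * Y"
      unfolding Y_def by (intro mult_right_mono of_nat_mono) simp_all
    with norm_W_scaled_le_no_move[OF mu n m L[unfolded L_def] no_move]
    show ?thesis unfolding Y_def v_def by linarith
  qed
  then show ?case unfolding Y_def L_def .
qed

lemma Vg_eq_set_map_upt:
  assumes "\<gamma> 0 = \<gamma> l" "0 < l"
  shows "Vg l \<gamma> = set (map \<gamma> [0..<l])"
proof -
  have "{0..l} = insert l {0..<l}" by auto
  moreover have "\<gamma> l \<in> \<gamma> ` {0..<l}" using assms by (metis atLeastLessThan_iff image_eqI le0)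
  ultimately show ?thesis unfolding Vg_def by auto
qed

lemma W_eq_W_word:
  assumes "\<gamma> 0 = \<gamma> l" "0 < l"
  shows "W n m B l \<gamma> = W_word n m B (map \<gamma> [0..<l])"
proof -
  have next_vertex: "\<gamma> (Suc i mod l) = \<gamma> (Suc i)" if "i < l" for i
    using assms that by (cases "Suc i = l") simp_all
  have "omega n B l \<gamma> s = cyclic_prod (\<lambda>x y. gram n B (s x) (s y)) (map \<gamma> [0..<l])" for s
    unfolding omega_def cyclic_prod_def gram_def by (intro prod.cong) (simp_all add: next_vertex)
  then show ?thesis unfolding W_def W_word_def vg_def Vg_eq_set_map_upt[OF assms] by simp
qed

theorem lemma3:
  fixes l :: nat
  assumes "l \<ge> 1"
  shows "\<exists>C :: real. \<forall>(n::nat) (m::nat) (p::nat) (B :: nat \<Rightarrow> nat \<Rightarrow> nat \<Rightarrow> complex) (\<gamma> :: nat \<Rightarrow> nat).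
     n \<ge> 2 \<longrightarrow> m \<ge> 2 \<longrightarrow> real m \<ge> sqrt (real n) \<longrightarrow> mutually_unbiased n m B \<longrightarrow>
     p \<ge> 1 \<longrightarrow> closed_path p l \<gamma> \<longrightarrow>
     (if in_Gamma l \<gamma>
      then W n m B l \<gamma> = complex_of_real (real n powr (1 - real (vg l \<gamma>)))
      else cmod (W n m B l \<gamma>) \<le> C * (real n powr (1 - real (vg l \<gamma>))) * (1 / real m + 1 / real n))"
proof (intro exI[of _ "real ((l + 1) ^ (l + 1))"] allI impI)
  fix n m p :: nat and B :: "nat \<Rightarrow> nat \<Rightarrow> nat \<Rightarrow> complex" and \<gamma> :: "nat \<Rightarrow> nat"
  assume n: "n \<ge> 2" and m: "m \<ge> 2" and sqrt_le: "real m \<ge> sqrt (real n)"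
    and mu: "mutually_unbiased n m B" and "p \<ge> 1" and closed: "closed_path p l \<gamma>"
  define xs where "xs = map \<gamma> [0..<l]"
  define c where "c = real n powr (1 - real (vg l \<gamma>))"
  have "\<gamma> 0 = \<gamma> l" "0 < l" using closed assms unfolding closed_path_def by simp_all
  then have W: "W n m B l \<gamma> = of_real c * W_scaled n m B xs"
    unfolding c_def vg_def Vg_eq_set_map_upt[OF \<open>\<gamma> 0 = \<gamma> l\<close> \<open>0 < l\<close>] xs_def
    using n by (simp add: W_eq_W_word W_word_eq_W_scaled)
  have ons: "\<forall>i<m. orthonormal_basis n (B i)" using mu unfolding mutually_unbiased_def by blast
  have "xs \<noteq> []" "length xs = l" "0 < n" using \<open>0 < l\<close> n unfolding xs_def by simp_all
  have "\<not> in_Gamma l \<gamma> \<Longrightarrow> cmod (W_scaled n m B xs) \<le> real ((l + 1) ^ (l + 1)) * (1 / real m + 1 / real n)"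
    unfolding in_Gamma_def xs_def[symmetric]
    using norm_W_scaled_le_irreducible[OF mu \<open>0 < n\<close> sqrt_le _ \<open>xs \<noteq> []\<close>] unfolding \<open>length xs = l\<close> .
  then have "\<not> in_Gamma l \<gamma> \<Longrightarrow> cmod (W n m B l \<gamma>) \<le> c * (real ((l + 1) ^ (l + 1)) * (1 / real m + 1 / real n))"
    unfolding W c_def by (simp add: norm_mult mult_left_mono)
  moreover have "in_Gamma l \<gamma> \<Longrightarrow> W n m B l \<gamma> = of_real c"
    unfolding W in_Gamma_def xs_def[symmetric] using W_scaled_reducible[OF ons] n m by simp
  ultimately show "if in_Gamma l \<gamma> then W n m B l \<gamma> = complex_of_real c
      else cmod (W n m B l \<gamma>) \<le> real ((l + 1) ^ (l + 1)) * c * (1 / real m + 1 / real n)"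
    by (simp add: mult_ac)
qed

end
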